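(* Let $a\ge 2$ be an integer. For $i\ge 0$, let $S^{(a)}_i=\{a^{2i},a^{2i}+1,\ldots,a^{2i+1}\}$, and let $S^{(a)}=\bigcup_{i\ge0}S^{(a)}_i$. For each $i$, let $\sigma^a_i$ be a permutation of $S^{(a)}_i$ containing no 3-term arithmetic progression as a subsequence. Then: (a) the concatenation $\sigma^a_0\sigma^a_1\sigma^a_2\cdots$ contains no 4-term arithmetic progression as a subsequence, so $S^{(a)}$ is 4-free; (b) $\overline{d}(S^{(a)})=a/(a+1)$ and $\underline{d}(S^{(a)})=1/(a+1)$.
   Context: A sequence contains a $k$-term arithmetic progression as a subsequence if there are positions $i_1<\cdots<i_k$ whose entries satisfy $a_{i_{m+1}}-a_{i_m}=d$ for all $m$, for some fixed $d\neq0$ (positive or negative). A set $S$ of positive integers is $n$-free if its elements can be listed in a sequence, each element appearing exactly once, that contains no $n$-term arithmetic progression as a subsequence. For $S\subseteq\mathbb{Z}_{>0}$ with $A(n)=|S\cap[1,n]|$, the upper density is $\overline{d}(S)=\limsup_{n\to\infty} A(n)/n$ and the lower density is $\underline{d}(S)=\liminf_{n\to\infty} A(n)/n$. Every finite set of consecutive integers admits a permutation with no 3-term arithmetic progression as a subsequence. *)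

theory Defs
  imports "HOL-Analysis.Analysis" "HOL-Library.Liminf_Limsup"
begin

definition has_AP_list :: "nat \<Rightarrow> nat list \<Rightarrow> bool" where
  "has_AP_list k xs \<longleftrightarrow> (\<exists>(pos :: nat \<Rightarrow> nat) (d :: int). d \<noteq> 0 \<and>
      (\<forall>m<k. pos m < length xs) \<and>
      (\<forall>m. Suc m < k \<longrightarrow> pos m < pos (Suc m) \<and>
            int (xs ! pos (Suc m)) - int (xs ! pos m) = d))"

definition has_AP_seq :: "nat \<Rightarrow> (nat \<Rightarrow> nat) \<Rightarrow> bool" where
  "has_AP_seq k f \<longleftrightarrow> (\<exists>(pos :: nat \<Rightarrow> nat) (d :: int). d \<noteq> 0 \<and>
      (\<forall>m. Suc m < k \<longrightarrow> pos m < pos (Suc m) \<and>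
            int (f (pos (Suc m))) - int (f (pos m)) = d))"

text \<open>A set of positive integers is n-free if it can be listed (each element exactly once)
  in a sequence with no n-term AP subsequence; finite sets are listed by lists,
  infinite sets by bijective sequences indexed by nat.\<close>
definition n_free :: "nat \<Rightarrow> nat set \<Rightarrow> bool" where
  "n_free n S \<longleftrightarrow>
     (finite S \<and> (\<exists>xs. distinct xs \<and> set xs = S \<and> \<not> has_AP_list n xs)) \<or>
     (infinite S \<and> (\<exists>f. bij_betw f UNIV S \<and> \<not> has_AP_seq n f))"

definition counting :: "nat set \<Rightarrow> nat \<Rightarrow> nat" where
  "counting S n = card (S \<inter> {1..n})"

definition upper_density :: "nat set \<Rightarrow> ereal" where
  "upper_density S = limsup (\<lambda>n. ereal (real (counting S n) / real n))"

definition lower_density :: "nat set \<Rightarrow> ereal" where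
  "lower_density S = liminf (\<lambda>n. ereal (real (counting S n) / real n))"

definition blk_start :: "(nat \<Rightarrow> 'a list) \<Rightarrow> nat \<Rightarrow> nat" where
  "blk_start \<sigma> i = (\<Sum>j<i. length (\<sigma> j))"

definition concat_inf :: "(nat \<Rightarrow> 'a list) \<Rightarrow> nat \<Rightarrow> 'a" where
  "concat_inf \<sigma> n = (let i = (LEAST i. n < blk_start \<sigma> (Suc i)) in \<sigma> i ! (n - blk_start \<sigma> i))"

definition S_block :: "nat \<Rightarrow> nat \<Rightarrow> nat set" where
  "S_block a i = {a ^ (2*i) .. a ^ (2*i+1)}"

definition S_set :: "nat \<Rightarrow> nat set" where
  "S_set a = (\<Union>i. S_block a i)"

end

theory Submission
  imports Defs "HOL-Real_Asymp.Real_Asymp"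
begin

(* A 4-term AP in the concatenation either has its last
   three terms inside one block -- a 3-term AP in a single sigma_i, excluded by hypothesis -- or
   it has two consecutive terms y, z with z in a strictly later block than y.  For the set S the
   blocks grow so fast that then z >= 2y, so x + z > 2y for the preceding term x, contradicting
   the AP.  The concatenation is moreover a bijection onto S (the blocks are distinct lists with
   pairwise disjoint supports), hence S is 4-free.
   (b) The counting function of S is computed exactly at the block boundaries:
   (a+1) A(a^(2i) - 1) + 1 = a^(2i) + (a+1) i.  Between boundaries this gives
   n/(a+1) <= A(n) <= a n/(a+1) + (i+1) with i+1 <= sqrt n, while at n = a^(2i+1) and at
   n = a^(2i+2) - 1 the ratio A(n)/n is at least a/(a+1), resp. at most 1/(a+1) + sqrt n / n.
   Two general lemmas identifying limsup/liminf from such bounds yield the densities. *)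

section \<open>Infinite concatenation of nonempty blocks\<close>

definition blk_index :: "(nat \<Rightarrow> 'a list) \<Rightarrow> nat \<Rightarrow> nat" where
  "blk_index \<sigma> n = (LEAST i. n < blk_start \<sigma> (Suc i))"

lemma blk_start_0 [simp]: "blk_start \<sigma> 0 = 0"
  by (simp add: blk_start_def)

lemma blk_start_Suc: "blk_start \<sigma> (Suc i) = blk_start \<sigma> i + length (\<sigma> i)"
  by (simp add: blk_start_def)

lemma concat_inf_blk: "concat_inf \<sigma> n = \<sigma> (blk_index \<sigma> n) ! (n - blk_start \<sigma> (blk_index \<sigma> n))"
  unfolding concat_inf_def blk_index_def Let_def ..

context
  fixes \<sigma> :: "nat \<Rightarrow> 'a list"
  assumes nonempty: "\<And>i. \<sigma> i \<noteq> []"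
begin

lemma blk_start_strict_mono: "strict_mono (blk_start \<sigma>)"
  by (rule strict_mono_Suc_iff[THEN iffD2]) (use nonempty in \<open>auto simp: blk_start_Suc\<close>)

lemma blk_index_bounds:
  "blk_start \<sigma> (blk_index \<sigma> n) \<le> n \<and> n < blk_start \<sigma> (Suc (blk_index \<sigma> n))"
proof
  have "n < blk_start \<sigma> (Suc n)"
    using strict_mono_imp_increasing[OF blk_start_strict_mono, of "Suc n"] by simp
  then show "n < blk_start \<sigma> (Suc (blk_index \<sigma> n))"
    unfolding blk_index_def by (rule LeastI)
  show "blk_start \<sigma> (blk_index \<sigma> n) \<le> n"
  proof (cases "blk_index \<sigma> n")
    case (Suc j)
    then have "\<not> n < blk_start \<sigma> (Suc j)"
      using not_less_Least[of j "\<lambda>i. n < blk_start \<sigma> (Suc i)"] unfolding blk_index_def by simp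
    then show ?thesis using Suc by simp
  qed simp
qed

lemma blk_index_eqI:
  assumes "blk_start \<sigma> i \<le> n" "n < blk_start \<sigma> (Suc i)"
  shows "blk_index \<sigma> n = i"
proof -
  have "i \<le> blk_index \<sigma> n \<and> blk_index \<sigma> n \<le> i"
    using assms blk_index_bounds[of n]
      strict_mono_less[OF blk_start_strict_mono, of "blk_index \<sigma> n" "Suc i"]
      strict_mono_less[OF blk_start_strict_mono, of i "Suc (blk_index \<sigma> n)"]
    by (metis le_less_trans less_Suc_eq_le not_le)
  then show ?thesis by simp
qed

lemma blk_index_mono: "n \<le> m \<Longrightarrow> blk_index \<sigma> n \<le> blk_index \<sigma> m"
  using blk_index_bounds[of m] unfolding blk_index_def[of _ n]
  by (intro Least_le) linarith

lemma blk_offset_less: "n - blk_start \<sigma> (blk_index \<sigma> n) < length (\<sigma> (blk_index \<sigma> n))"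
  using blk_index_bounds[of n] unfolding blk_start_Suc by linarith

lemma concat_inf_mem: "concat_inf \<sigma> n \<in> set (\<sigma> (blk_index \<sigma> n))"
  using concat_inf_blk blk_offset_less nth_mem by metis

lemma concat_inf_at:
  assumes "k < length (\<sigma> i)"
  shows "concat_inf \<sigma> (blk_start \<sigma> i + k) = \<sigma> i ! k"
proof -
  have "blk_index \<sigma> (blk_start \<sigma> i + k) = i"
    using assms by (intro blk_index_eqI) (simp_all add: blk_start_Suc)
  then show ?thesis by (simp add: concat_inf_blk)
qed

lemma concat_inf_bij:
  assumes "\<And>i. distinct (\<sigma> i)" and "\<And>i j. i \<noteq> j \<Longrightarrow> set (\<sigma> i) \<inter> set (\<sigma> j) = {}"
  shows "bij_betw (concat_inf \<sigma>) UNIV (\<Union>i. set (\<sigma> i))"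
proof -
  have "inj (concat_inf \<sigma>)"
  proof (rule injI)
    fix n m assume eq: "concat_inf \<sigma> n = concat_inf \<sigma> m"
    define B where "B = blk_index \<sigma> n"
    have "concat_inf \<sigma> n \<in> set (\<sigma> B) \<inter> set (\<sigma> (blk_index \<sigma> m))"
      using concat_inf_mem[of n] concat_inf_mem[of m] eq unfolding B_def by simp
    then have same_block: "blk_index \<sigma> m = B"
      using assms(2)[of B "blk_index \<sigma> m"] by auto
    define s where "s = blk_start \<sigma> B"
    have "\<sigma> B ! (n - s) = \<sigma> B ! (m - s)"
      using eq same_block unfolding concat_inf_blk[of _ n] concat_inf_blk[of _ m] B_def s_def
      by simp
    then have "n - s = m - s"
      using nth_eq_iff_index_eq[OF assms(1)] blk_offset_less[of n] blk_offset_less[of m] same_block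
      unfolding B_def s_def by simp
    moreover have "s \<le> n" "s \<le> m"
      using blk_index_bounds[of n] blk_index_bounds[of m] same_block unfolding B_def s_def by auto
    ultimately show "n = m" by linarith
  qed
  moreover have "range (concat_inf \<sigma>) = (\<Union>i. set (\<sigma> i))"
  proof
    show "range (concat_inf \<sigma>) \<subseteq> (\<Union>i. set (\<sigma> i))" using concat_inf_mem by blast
    show "(\<Union>i. set (\<sigma> i)) \<subseteq> range (concat_inf \<sigma>)"
    proof
      fix x assume "x \<in> (\<Union>i. set (\<sigma> i))"
      then obtain i k where "k < length (\<sigma> i)" "\<sigma> i ! k = x" by (auto simp: in_set_conv_nth)
      then show "x \<in> range (concat_inf \<sigma>)" using concat_inf_at by (metis rangeI)
    qed
  qed
  ultimately show ?thesis by (simp add: bij_betw_def)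
qed

end

context
  fixes \<sigma> :: "nat \<Rightarrow> nat list"
  assumes nonempty: "\<And>i. \<sigma> i \<noteq> []"
begin

lemma AP3_in_block:
  fixes p :: "nat \<Rightarrow> nat" and d :: int
  assumes "p 0 < p 1" "p 1 < p 2" "\<And>m. m < 3 \<Longrightarrow> blk_index \<sigma> (p m) = B"
    and "d \<noteq> 0" "int (concat_inf \<sigma> (p 1)) - int (concat_inf \<sigma> (p 0)) = d"
    "int (concat_inf \<sigma> (p 2)) - int (concat_inf \<sigma> (p 1)) = d"
  shows "has_AP_list 3 (\<sigma> B)"
proof -
  define s where "s = blk_start \<sigma> B"
  have in_block: "s \<le> p m \<and> p m - s < length (\<sigma> B)" if "m < 3" for m
    using blk_index_bounds[OF nonempty, where n="p m"] blk_offset_less[OF nonempty, where n="p m"]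
      assms(3)[OF that]
    unfolding s_def by auto
  have entry: "concat_inf \<sigma> (p m) = \<sigma> B ! (p m - s)" if "m < 3" for m
    using concat_inf_blk[of \<sigma> "p m"] assms(3)[OF that] unfolding s_def by simp
  have order: "p 0 - s < p 1 - s" "p 1 - s < p 2 - s"
    using assms(1,2) in_block[of 0] in_block[of 1] in_block[of 2] by auto
  have steps: "int (\<sigma> B ! (p 1 - s)) - int (\<sigma> B ! (p 0 - s)) = d"
    "int (\<sigma> B ! (p 2 - s)) - int (\<sigma> B ! (p 1 - s)) = d"
    using assms(5,6) entry[of 0] entry[of 1] entry[of 2] by simp_all
  show ?thesis
    unfolding has_AP_list_def
  proof (intro exI[of _ "\<lambda>m. p m - s"] exI[of _ d] conjI allI impI)
    fix m :: nat assume "m < 3"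
    then show "p m - s < length (\<sigma> B)" using in_block by blast
  next
    fix m :: nat assume "Suc m < 3"
    then have "m = 0 \<or> m = 1" by linarith
    then show "p m - s < p (Suc m) - s" "int (\<sigma> B ! (p (Suc m) - s)) - int (\<sigma> B ! (p m - s)) = d"
      using order steps by (auto simp: numeral_2_eq_2)
  qed (rule assms(4))
qed

lemma concat_inf_no_AP4:
  assumes block_free: "\<And>i. \<not> has_AP_list 3 (\<sigma> i)"
    and no_jump: "\<And>p q r. p < q \<Longrightarrow> q < r \<Longrightarrow> blk_index \<sigma> q < blk_index \<sigma> r \<Longrightarrow>
        int (concat_inf \<sigma> q) - int (concat_inf \<sigma> p) \<noteq> int (concat_inf \<sigma> r) - int (concat_inf \<sigma> q)"
  shows "\<not> has_AP_seq 4 (concat_inf \<sigma>)"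
proof
  let ?f = "concat_inf \<sigma>"
  assume "has_AP_seq 4 ?f"
  then obtain pos and d :: int where "d \<noteq> 0" and
    ap: "\<And>m. Suc m < 4 \<Longrightarrow> pos m < pos (Suc m) \<and> int (?f (pos (Suc m))) - int (?f (pos m)) = d"
    unfolding has_AP_seq_def by blast
  have ap0: "pos 0 < pos 1" "int (?f (pos 1)) - int (?f (pos 0)) = d"
    and ap1: "pos 1 < pos 2" "int (?f (pos 2)) - int (?f (pos 1)) = d"
    and ap2: "pos 2 < pos 3" "int (?f (pos 3)) - int (?f (pos 2)) = d"
    using ap[of 0] ap[of 1] ap[of 2] by (simp_all add: numeral_eq_Suc)
  let ?b = "\<lambda>m. blk_index \<sigma> (pos m)"
  have "?b 1 \<le> ?b 2" "?b 2 \<le> ?b 3"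
    using blk_index_mono[OF nonempty] ap1(1) ap2(1) by (simp_all add: less_imp_le)
  then consider "?b 1 < ?b 2" | "?b 2 < ?b 3" | "?b 1 = ?b 3" "?b 2 = ?b 3" by linarith
  then show False
  proof cases
    case 1
    then show False using no_jump[of "pos 0" "pos 1" "pos 2"] ap0 ap1 by simp
  next
    case 2
    then show False using no_jump[of "pos 1" "pos 2" "pos 3"] ap1 ap2 by simp
  next
    case 3
    have "has_AP_list 3 (\<sigma> (?b 3))"
      using ap1 ap2 \<open>d \<noteq> 0\<close> 3
      by (intro AP3_in_block[of "\<lambda>m. pos (Suc m)" _ d])
         (auto simp: numeral_eq_Suc less_Suc_eq)
    then show False using block_free by blast
  qed
qed

end

section \<open>The set S: blocks [a^(2i), a^(2i+1)]\<close>

context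
  fixes a :: nat
  assumes a2: "a \<ge> 2"
begin

lemma S_block_nonempty: "S_block a i \<noteq> {}"
  using a2 by (auto simp: S_block_def intro!: exI[of _ "a ^ (2*i)"])

lemma S_block_pos: "x \<in> S_block a i \<Longrightarrow> 1 \<le> x"
  using a2 order_trans[OF one_le_power[of a "2*i"]] by (auto simp: S_block_def)

lemma S_block_double:
  assumes "y \<in> S_block a j" "z \<in> S_block a k" "j < k"
  shows "2 * y \<le> z"
proof -
  have "2 * y \<le> a * a ^ (2*j+1)" using assms(1) a2 by (auto simp: S_block_def intro: mult_mono)
  also have "\<dots> = a ^ (2*j+2)" by simp
  also have "\<dots> \<le> a ^ (2*k)" using a2 assms(3) by (intro power_increasing) auto
  also have "\<dots> \<le> z" using assms(2) by (simp add: S_block_def)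
  finally show ?thesis .
qed

lemma S_block_disjoint:
  assumes "j \<noteq> k"
  shows "S_block a j \<inter> S_block a k = {}"
proof -
  have "y \<noteq> z" if "y \<in> S_block a j" "z \<in> S_block a k" "j < k" for y z j k
    using S_block_double[OF that] S_block_pos[OF that(1)] by linarith
  then show ?thesis using assms by (metis disjoint_iff neq_iff)
qed

lemma S_gap:
  assumes "a ^ (2*i+1) < x" "x < a ^ (2*i+2)"
  shows "x \<notin> S_set a"
proof
  assume "x \<in> S_set a"
  then obtain j where j: "a ^ (2*j) \<le> x" "x \<le> a ^ (2*j+1)"
    unfolding S_set_def S_block_def by auto
  show False
  proof (cases "j \<le> i")
    case True
    then have "a ^ (2*j+1) \<le> a ^ (2*i+1)" using a2 by (intro power_increasing) auto
    then show False using assms j by linarith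
  next
    case False
    then have "a ^ (2*i+2) \<le> a ^ (2*j)" using a2 by (intro power_increasing) auto
    then show False using assms j by linarith
  qed
qed

lemma S_concat_no_AP4:
  fixes \<sigma> :: "nat \<Rightarrow> nat list"
  assumes "\<And>i. set (\<sigma> i) = S_block a i" "\<And>i. \<not> has_AP_list 3 (\<sigma> i)"
  shows "\<not> has_AP_seq 4 (concat_inf \<sigma>)"
proof (rule concat_inf_no_AP4)
  show "\<sigma> i \<noteq> []" for i using S_block_nonempty[of i] assms(1)[of i] by auto
  then have mem: "concat_inf \<sigma> n \<in> S_block a (blk_index \<sigma> n)" for n
    using concat_inf_mem assms(1) by metis
  fix p q r :: nat assume "p < q" "q < r" and later: "blk_index \<sigma> q < blk_index \<sigma> r"
  from later have "2 * concat_inf \<sigma> q \<le> concat_inf \<sigma> r" by (rule S_block_double[OF mem mem])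
  moreover have "1 \<le> concat_inf \<sigma> p" using S_block_pos mem by blast
  ultimately show "int (concat_inf \<sigma> q) - int (concat_inf \<sigma> p) \<noteq>
      int (concat_inf \<sigma> r) - int (concat_inf \<sigma> q)" by linarith
qed (use assms(2) in simp)

lemma S_concat_bij:
  fixes \<sigma> :: "nat \<Rightarrow> nat list"
  assumes "\<And>i. set (\<sigma> i) = S_block a i" "\<And>i. distinct (\<sigma> i)"
  shows "bij_betw (concat_inf \<sigma>) UNIV (S_set a)"
proof -
  have "\<sigma> i \<noteq> []" for i using S_block_nonempty[of i] assms(1)[of i] by auto
  then have "bij_betw (concat_inf \<sigma>) UNIV (\<Union>i. set (\<sigma> i))"
    using assms S_block_disjoint by (intro concat_inf_bij) auto
  then show ?thesis using assms(1) by (simp add: S_set_def)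
qed

end

section \<open>The counting function of S\<close>

lemma counting_split:
  assumes "n \<le> m"
  shows "counting S m = counting S n + card (S \<inter> {n<..m})"
proof -
  have "S \<inter> {1..m} = (S \<inter> {1..n}) \<union> (S \<inter> {n<..m})" using assms by auto
  then show ?thesis unfolding counting_def by (simp add: card_Un_disjoint disjoint_iff)
qed

context
  fixes a :: nat
  assumes a2: "a \<ge> 2"
begin

lemma counting_in_block:
  assumes "a ^ (2*i) \<le> n" "n \<le> a ^ (2*i+1)"
  shows "counting (S_set a) n + a ^ (2*i) = counting (S_set a) (a ^ (2*i) - 1) + n + 1"
proof -
  have pos: "1 \<le> a ^ (2*i)" using a2 by simp
  have "{a ^ (2*i)..n} \<subseteq> S_block a i" using assms by (auto simp: S_block_def)
  then have "{a ^ (2*i)..n} \<subseteq> S_set a" by (auto simp: S_set_def)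
  moreover have "{a ^ (2*i) - 1<..n} = {a ^ (2*i)..n}" using pos by auto
  ultimately have "S_set a \<inter> {a ^ (2*i) - 1<..n} = {a ^ (2*i)..n}" by auto
  then show ?thesis using counting_split[of "a ^ (2*i) - 1" n "S_set a"] assms pos by simp
qed

lemma counting_in_gap:
  assumes "a ^ (2*i+1) \<le> n" "n < a ^ (2*i+2)"
  shows "counting (S_set a) n = counting (S_set a) (a ^ (2*i+1))"
proof -
  have "S_set a \<inter> {a ^ (2*i+1)<..n} = {}" using S_gap[OF a2, of i] assms by fastforce
  then show ?thesis using counting_split[of "a ^ (2*i+1)" n "S_set a"] assms by simp
qed

lemma counting_gap_end: "counting (S_set a) (a ^ (2*i+2) - 1) = counting (S_set a) (a ^ (2*i+1))"
proof -
  have "a ^ (2*i+1) < a ^ (2*i+2)" using a2 by (intro power_strict_increasing) auto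
  then show ?thesis by (intro counting_in_gap) linarith+
qed

text \<open>Exact count just before the i-th block: the blocks below contribute
  sum over j < i of (a^(2j+1) - a^(2j) + 1).\<close>
lemma counting_before_block:
  "(a + 1) * counting (S_set a) (a ^ (2*i) - 1) + 1 = a ^ (2*i) + (a + 1) * i"
proof (induction i)
  case 0
  then show ?case by (simp add: counting_def)
next
  case (Suc i)
  define A where "A = a ^ (2*i)"
  define P where "P = counting (S_set a) (A - 1)"
  define Q where "Q = counting (S_set a) (a ^ (2*i+1))"
  have "A \<le> a ^ (2*i+1)" unfolding A_def using a2 by (intro power_increasing) auto
  then have block: "Q + A = P + a * A + 1"
    using counting_in_block[of i "a ^ (2*i+1)"] unfolding P_def Q_def A_def by simp
  have next_block: "counting (S_set a) (a ^ (2 * Suc i) - 1) = Q"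
    using counting_gap_end[of i] unfolding Q_def by simp
  have "(a + 1) * (Q + A) = (a + 1) * (P + a * A + 1)" by (simp only: block)
  then have "(a + 1) * Q + 1 = a * (a * A) + (a + 1) * Suc i"
    using Suc.IH unfolding P_def A_def[symmetric] by (simp add: algebra_simps)
  also have "\<dots> = a ^ (2 * Suc i) + (a + 1) * Suc i" unfolding A_def by simp
  finally show ?case unfolding next_block .
qed

lemma counting_at_block_end:
  "(a + 1) * counting (S_set a) (a ^ (2*i+1)) + 1 = a ^ (2*i+2) + (a + 1) * (i + 1)"
  using counting_before_block[of "Suc i"] counting_gap_end[of i] by simp

lemma stretch_exists:
  assumes "1 \<le> n"
  shows "\<exists>i. a ^ (2*i) \<le> n \<and> n < a ^ (2*i+2)"
proof -
  have "n < 2 ^ n" by (rule less_exp)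
  also have "\<dots> \<le> a ^ n" using a2 by (intro power_mono) auto
  also have "\<dots> \<le> a ^ (2*n)" using a2 by (intro power_increasing) auto
  finally have ex: "n < a ^ (2*n)" .
  define j where "j = (LEAST j. n < a ^ (2*j))"
  have j: "n < a ^ (2*j)" unfolding j_def by (rule LeastI[of "\<lambda>j. n < a ^ (2*j)" n, OF ex])
  then obtain i where i: "j = Suc i" using assms by (cases j) auto
  then have "\<not> n < a ^ (2*i)"
    using not_less_Least[of i "\<lambda>j. n < a ^ (2*j)"] unfolding j_def by simp
  moreover have "n < a ^ (2*i+2)" using j i by simp
  ultimately show ?thesis by (intro exI[of _ i]) simp
qed

lemma counting_bounds:
  assumes "a ^ (2*i) \<le> n" "n < a ^ (2*i+2)"
  shows "(a + 1) * counting (S_set a) n \<le> a * n + (a + 1) * (i + 1)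
    \<and> n \<le> (a + 1) * counting (S_set a) n"
proof -
  define A where "A = a ^ (2*i)"
  define c where "c = counting (S_set a) n"
  have before: "(a + 1) * counting (S_set a) (A - 1) + 1 = A + (a + 1) * i"
    unfolding A_def by (rule counting_before_block)
  have "A \<le> n" "n < a * (a * A)" using assms unfolding A_def by simp_all
  show ?thesis
  proof (cases "n \<le> a * A")
    case True
    then have "c + A = counting (S_set a) (A - 1) + n + 1"
      using counting_in_block[of i n] assms unfolding A_def c_def by simp
    then have "(a + 1) * c + (a + 1) * A + 1 = A + (a + 1) * i + (a + 1) * (n + 1)"
      using before by (metis add_mult_distrib2 add.assoc add.commute)
    moreover have "a * A \<le> a * n" using \<open>A \<le> n\<close> by simp
    ultimately show ?thesis using True unfolding c_def[symmetric]
      by (simp only: algebra_simps mult_1_left mult_1_right) linarith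
  next
    case False
    then have "c = counting (S_set a) (a ^ (2*i+1))"
      using counting_in_gap[of i n] assms unfolding A_def c_def by simp
    then have "(a + 1) * c + 1 = a * (a * A) + (a + 1) * (i + 1)"
      using counting_at_block_end[of i] unfolding A_def by simp
    moreover have "a * (a * A) \<le> a * n" using False by simp
    ultimately show ?thesis using \<open>n < a * (a * A)\<close> unfolding c_def[symmetric]
      by (simp only: algebra_simps mult_1_left mult_1_right) linarith
  qed
qed

text \<open>The index of the stretch containing n is of order log n, in particular at most sqrt n.\<close>
lemma stretch_index_le_sqrt:
  assumes "a ^ (2*i) \<le> n"
  shows "real i + 1 \<le> sqrt (real n)"
proof (rule real_le_rsqrt)
  have "Suc i \<le> 2 ^ i" using less_exp[of i] by (simp only: Suc_le_eq)
  also have "\<dots> \<le> a ^ i" using a2 by (intro power_mono) auto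
  finally have "Suc i ^ 2 \<le> (a ^ i) ^ 2" by (rule power_mono) simp
  also have "\<dots> \<le> n" using assms by (simp add: power_mult[symmetric] mult.commute)
  finally show "(real i + 1) ^ 2 \<le> real n" by (metis of_nat_Suc of_nat_le_iff of_nat_power add.commute)
qed

end

section \<open>Densities\<close>

lemma ratio_le_of_scaled:
  fixes c n k m e :: real
  assumes "0 < n" "0 < k" "k * c \<le> m * n + k * e"
  shows "c / n \<le> m / k + e / n"
  using assms by (simp add: field_simps)

lemma ratio_ge_of_scaled:
  fixes c n k m :: real
  assumes "0 < n" "0 < k" "m * n \<le> k * c"
  shows "m / k \<le> c / n"
  using assms by (simp add: field_simps)

lemma sqrt_over_self_tendsto_0: "(\<lambda>n::nat. sqrt (real n) / real n) \<longlonglongrightarrow> 0"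
  by real_asymp

lemma limsup_eq_by_bounds:
  fixes u e :: "nat \<Rightarrow> real" and r :: "nat \<Rightarrow> nat"
  assumes upper: "eventually (\<lambda>n. u n \<le> L + e n) sequentially" and e: "e \<longlonglongrightarrow> 0"
    and r: "strict_mono r" and lower: "\<And>i. L \<le> u (r i)"
  shows "limsup (\<lambda>n. ereal (u n)) = ereal L"
proof (rule antisym)
  have "limsup (\<lambda>n. ereal (u n)) \<le> limsup (\<lambda>n. ereal (L + e n))"
    using upper by (intro Limsup_mono) (auto elim: eventually_mono)
  also have "\<dots> = ereal L"
    using tendsto_add[OF tendsto_const e, of L] by (intro lim_imp_Limsup) (auto intro: tendsto_ereal)
  finally show "limsup (\<lambda>n. ereal (u n)) \<le> ereal L" .
  have "ereal L \<le> limsup ((\<lambda>n. ereal (u n)) \<circ> r)"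
    using lower by (intro le_Limsup) auto
  also have "\<dots> \<le> limsup (\<lambda>n. ereal (u n))" by (rule limsup_subseq_mono[OF r])
  finally show "ereal L \<le> limsup (\<lambda>n. ereal (u n))" .
qed

lemma liminf_eq_by_bounds:
  fixes u e :: "nat \<Rightarrow> real" and r :: "nat \<Rightarrow> nat"
  assumes lower: "eventually (\<lambda>n. L \<le> u n) sequentially" and e: "e \<longlonglongrightarrow> 0"
    and r: "strict_mono r" and upper: "\<And>i. u (r i) \<le> L + e (r i)"
  shows "liminf (\<lambda>n. ereal (u n)) = ereal L"
proof (rule antisym)
  have "liminf (\<lambda>n. ereal (u n)) \<le> liminf ((\<lambda>n. ereal (u n)) \<circ> r)"
    by (rule liminf_subseq_mono[OF r])
  also have "\<dots> \<le> liminf (\<lambda>i. ereal (L + e (r i)))"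
    using upper by (intro Liminf_mono) auto
  also have "\<dots> = ereal L"
    using tendsto_add[OF tendsto_const LIMSEQ_subseq_LIMSEQ[OF e r], of L]
    by (intro lim_imp_Liminf) (auto intro: tendsto_ereal simp: o_def)
  finally show "liminf (\<lambda>n. ereal (u n)) \<le> ereal L" .
  show "ereal L \<le> liminf (\<lambda>n. ereal (u n))"
    using lower by (intro Liminf_bounded) (auto elim: eventually_mono)
qed

context
  fixes a :: nat
  assumes a2: "a \<ge> 2"
begin

lemma S_ratio_bounds:
  assumes "1 \<le> n"
  shows "real (counting (S_set a) n) / real n \<le> real a / (real a + 1) + sqrt (real n) / real n
    \<and> 1 / (real a + 1) \<le> real (counting (S_set a) n) / real n"
proof
  obtain i where i: "a ^ (2*i) \<le> n" "n < a ^ (2*i+2)" using stretch_exists[OF a2 assms] by blast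
  let ?c = "real (counting (S_set a) n)"
  have "real ((a + 1) * counting (S_set a) n) \<le> real (a * n + (a + 1) * (i + 1))"
    "real n \<le> real ((a + 1) * counting (S_set a) n)"
    using counting_bounds[OF a2 i] by (simp_all only: of_nat_le_iff)
  then have bounds: "(real a + 1) * ?c \<le> real a * real n + (real a + 1) * (real i + 1)"
    "1 * real n \<le> (real a + 1) * ?c"
    by (simp_all add: algebra_simps)
  have "(real a + 1) * (real i + 1) \<le> (real a + 1) * sqrt (real n)"
    using stretch_index_le_sqrt[OF a2 i(1)] by (intro mult_left_mono) auto
  then have "(real a + 1) * ?c \<le> real a * real n + (real a + 1) * sqrt (real n)"
    using bounds(1) by linarith
  then show "?c / real n \<le> real a / (real a + 1) + sqrt (real n) / real n"
    using assms by (intro ratio_le_of_scaled) auto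
  show "1 / (real a + 1) \<le> ?c / real n"
    using bounds(2) assms by (intro ratio_ge_of_scaled) auto
qed

text \<open>The upper density is attained along the block ends a^(2i+1) \<dots>\<close>
lemma S_upper_density: "upper_density (S_set a) = ereal (real a / (real a + 1))"
  unfolding upper_density_def
proof (rule limsup_eq_by_bounds[OF _ sqrt_over_self_tendsto_0])
  show "eventually (\<lambda>n. real (counting (S_set a) n) / real n
      \<le> real a / (real a + 1) + sqrt (real n) / real n) sequentially"
    using eventually_ge_at_top[of 1] by eventually_elim (use S_ratio_bounds in blast)
  show "strict_mono (\<lambda>i. a ^ (2*i+1))"
  proof (rule strict_mono_Suc_iff[THEN iffD2], intro allI)
    fix i show "a ^ (2*i+1) < a ^ (2*Suc i+1)" using a2 by (intro power_strict_increasing) auto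
  qed
  fix i :: nat
  have "(a + 1) * counting (S_set a) (a ^ (2*i+1)) + 1 = a * a ^ (2*i+1) + (a + 1) * (i + 1)"
    using counting_at_block_end[OF a2, of i] by simp
  moreover have "1 \<le> (a + 1) * (i + 1)" by simp
  ultimately have "a * a ^ (2*i+1) \<le> (a + 1) * counting (S_set a) (a ^ (2*i+1))" by linarith
  then have "real (a * a ^ (2*i+1)) \<le> real ((a + 1) * counting (S_set a) (a ^ (2*i+1)))"
    by (simp only: of_nat_le_iff)
  then have "real a * real (a ^ (2*i+1)) \<le> (real a + 1) * real (counting (S_set a) (a ^ (2*i+1)))"
    by (simp only: of_nat_mult of_nat_add of_nat_1)
  then show "real a / (real a + 1) \<le> real (counting (S_set a) (a ^ (2*i+1))) / real (a ^ (2*i+1))"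
    using a2 by (intro ratio_ge_of_scaled) auto
qed

text \<open>\<dots> and the lower density along the gap ends a^(2i+2) - 1.\<close>
lemma S_lower_density: "lower_density (S_set a) = ereal (1 / (real a + 1))"
  unfolding lower_density_def
proof (rule liminf_eq_by_bounds[OF _ sqrt_over_self_tendsto_0])
  show "eventually (\<lambda>n. 1 / (real a + 1) \<le> real (counting (S_set a) n) / real n) sequentially"
    using eventually_ge_at_top[of 1] by eventually_elim (use S_ratio_bounds in blast)
  define r where "r i = a ^ (2*i+2) - 1" for i
  have pow_pos: "1 \<le> a ^ k" for k using a2 by simp
  show "strict_mono r"
  proof (rule strict_mono_Suc_iff[THEN iffD2], intro allI)
    fix i
    have "a ^ (2*i+2) < a ^ (2*Suc i+2)" using a2 by (intro power_strict_increasing) auto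
    then show "r i < r (Suc i)" using pow_pos[of "2*i+2"] unfolding r_def by linarith
  qed
  fix i :: nat
  have "a ^ (2*i) < a ^ (2*i+2)" using a2 by (intro power_strict_increasing) auto
  then have ri: "a ^ (2*i) \<le> r i" "0 < r i" "r i + 1 = a ^ (2*i+2)"
    using pow_pos[of "2*i"] unfolding r_def by linarith+
  have "2 * Suc i = 2*i+2" by simp
  then have "(a + 1) * counting (S_set a) (r i) + 1 = a ^ (2*i+2) + (a + 1) * (i + 1)"
    using counting_before_block[OF a2, of "Suc i"] unfolding r_def by simp
  then have "(a + 1) * counting (S_set a) (r i) = r i + (a + 1) * (i + 1)"
    using ri(3) by linarith
  then have "real ((a + 1) * counting (S_set a) (r i)) = real (r i + (a + 1) * (i + 1))"
    by (simp only:)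
  then have "(real a + 1) * real (counting (S_set a) (r i)) = 1 * real (r i) + (real a + 1) * (real i + 1)"
    by (simp only: of_nat_mult of_nat_add of_nat_1 mult_1)
  also have "\<dots> \<le> 1 * real (r i) + (real a + 1) * sqrt (real (r i))"
    using stretch_index_le_sqrt[OF a2 ri(1)] by (intro add_left_mono mult_left_mono) auto
  finally show "real (counting (S_set a) (r i)) / real (r i)
      \<le> 1 / (real a + 1) + sqrt (real (r i)) / real (r i)"
    using ri(2) by (intro ratio_le_of_scaled) auto
qed

end

theorem mainTheorem8:
  fixes a :: nat and \<sigma> :: "nat \<Rightarrow> nat list"
  assumes "a \<ge> 2"
    and "\<And>i. distinct (\<sigma> i) \<and> set (\<sigma> i) = S_block a i \<and> \<not> has_AP_list 3 (\<sigma> i)"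
  shows "\<not> has_AP_seq 4 (concat_inf \<sigma>) \<and> n_free 4 (S_set a)
    \<and> upper_density (S_set a) = ereal (real a / (real a + 1))
    \<and> lower_density (S_set a) = ereal (1 / (real a + 1))"
proof -
  have blocks: "\<And>i. set (\<sigma> i) = S_block a i" "\<And>i. distinct (\<sigma> i)" "\<And>i. \<not> has_AP_list 3 (\<sigma> i)"
    using assms(2) by auto
  have no_AP4: "\<not> has_AP_seq 4 (concat_inf \<sigma>)"
    using S_concat_no_AP4[OF assms(1)] blocks by blast
  have bij: "bij_betw (concat_inf \<sigma>) UNIV (S_set a)"
    using S_concat_bij[OF assms(1)] blocks by blast
  then have "infinite (S_set a)" using bij_betw_finite by blast
  then have "n_free 4 (S_set a)" unfolding n_free_def using bij no_AP4 by blast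
  then show ?thesis
    using no_AP4 S_upper_density[OF assms(1)] S_lower_density[OF assms(1)] by blast
qed

end
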